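(* Let $(S,\mathcal{S})$ be a measurable space with $\Delta\in\mathcal{S}\otimes\mathcal{S}$ and let $\pi$ be a constructive cr-set with independent increments. If $P(\pi\cap \{x\}\neq \emptyset)=0$ for all $x\in S$, then $\pi$ is a Poisson process.
   Context: $\Delta=\{(x,x)\mid x\in S\}$. $(\Omega,\mathcal{F},P)$ is a probability space; $C(S)$ is the set of countable subsets of $S$; $N_A(M)=|A\cap M|$; $\mathcal{C}(\mathcal{S})=\sigma(N_A\mid A\in\mathcal{S})$; a cr-set is an $\mathcal{F}$-$\mathcal{C}(\mathcal{S})$ measurable map $\Omega\to C(S)$, finite if its values are finite sets. A map $\tau:\Omega\to C(S)$ is constructive if $\tau(\omega)=\bigcup_k\pi_k(\omega)$ for all $\omega$ for some finite cr-sets $\pi_k$, $k\in\mathbb{N}$. A cr-set $\pi$ has independent increments if $N_{A_1}(\pi),\dots,N_{A_n}(\pi)$ are independent for all pairwise disjoint $A_1,\dots,A_n\in\mathcal{S}$. It is a Poisson process if moreover $N_A(\pi)$ has a Poisson distribution for every $A\in\mathcal{S}$, where $\delta_0$ and $\delta_\infty$ count as Poisson distributions. *)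

theory Defs
  imports "HOL-Probability.Probability"
begin

definition Ncount :: "'a set \<Rightarrow> 'a set \<Rightarrow> enat" where
  "Ncount A X = (if finite (A \<inter> X) then enat (card (A \<inter> X)) else \<infinity>)"

definition countable_subsets :: "'a measure \<Rightarrow> 'a set set" where
  "countable_subsets M = {X. X \<subseteq> space M \<and> countable X}"

definition CS :: "'a measure \<Rightarrow> 'a set measure" where
  "CS M = sigma (countable_subsets M)
     {{X \<in> countable_subsets M. Ncount A X \<in> B} | A B. A \<in> sets M}"

definition cr_set :: "'b measure \<Rightarrow> 'a measure \<Rightarrow> ('b \<Rightarrow> 'a set) \<Rightarrow> bool" where
  "cr_set P M \<pi> \<longleftrightarrow> \<pi> \<in> measurable P (CS M)"

definition finite_cr_set :: "'b measure \<Rightarrow> 'a measure \<Rightarrow> ('b \<Rightarrow> 'a set) \<Rightarrow> bool" where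
  "finite_cr_set P M \<pi> \<longleftrightarrow> cr_set P M \<pi> \<and> (\<forall>\<omega>\<in>space P. finite (\<pi> \<omega>))"

definition constructive :: "'b measure \<Rightarrow> 'a measure \<Rightarrow> ('b \<Rightarrow> 'a set) \<Rightarrow> bool" where
  "constructive P M \<tau> \<longleftrightarrow>
     (\<exists>\<pi>s :: nat \<Rightarrow> 'b \<Rightarrow> 'a set. (\<forall>k. finite_cr_set P M (\<pi>s k)) \<and>
        (\<forall>\<omega>\<in>space P. \<tau> \<omega> = (\<Union>k. \<pi>s k \<omega>)))"

definition independent_increments :: "'b measure \<Rightarrow> 'a measure \<Rightarrow> ('b \<Rightarrow> 'a set) \<Rightarrow> bool" where
  "independent_increments P M \<pi> \<longleftrightarrow>
     (\<forall>(n::nat) (A :: nat \<Rightarrow> 'a set). (\<forall>i<n. A i \<in> sets M) \<and> disjoint_family_on A {..<n} \<longrightarrow>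
        prob_space.indep_vars P (\<lambda>_. count_space UNIV) (\<lambda>i \<omega>. Ncount (A i) (\<pi> \<omega>)) {..<n})"

text \<open>Poisson distribution on \<nat> \<union> {\<infinity>}, including \<delta>_0 (parameter 0) and \<delta>_\<infinity>.\<close>
definition poisson_distribution :: "enat measure \<Rightarrow> bool" where
  "poisson_distribution Q \<longleftrightarrow>
     Q = return (count_space UNIV) \<infinity> \<or>
     (\<exists>c::real. c \<ge> 0 \<and> (\<forall>k::nat. emeasure Q {enat k} = ennreal (c ^ k / fact k * exp (- c))))"

definition poisson_process :: "'b measure \<Rightarrow> 'a measure \<Rightarrow> ('b \<Rightarrow> 'a set) \<Rightarrow> bool" where
  "poisson_process P M \<pi> \<longleftrightarrow> cr_set P M \<pi> \<and> independent_increments P M \<pi> \<and>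
     (\<forall>A\<in>sets M. poisson_distribution (distr P (count_space UNIV) (\<lambda>\<omega>. Ncount A (\<pi> \<omega>))))"

end

theory Submission
  imports Defs
begin

text \<open>
  Since the diagonal is measurable, \<open>\<S>\<close> contains a sequence \<open>B\<^sub>0, B\<^sub>1, \<dots>\<close>
  separating the points of \<open>S\<close>, and the first \<open>m\<close> of these cut \<open>A\<close> into \<open>2^m\<close> measurable
  cells. By independent increments the events "\<open>\<pi>\<close> meets the cell \<open>c\<close>" are independent,
  with probabilities \<open>p\<^sub>c\<close> say, so if \<open>K\<^sub>m\<close> is the number of cells met then
  \<open>E z^K\<^sub>m = \<Prod>\<^sub>c (1 - (1 - z) p\<^sub>c)\<close>. As \<open>m \<rightarrow> \<infinity>\<close>, \<open>K\<^sub>m\<close> increases to \<open>N\<^sub>A\<close>, so these products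
  converge to the generating function \<open>E z^N\<^sub>A\<close> (with \<open>z^\<infinity> = 0\<close>).

  If \<open>max\<^sub>c p\<^sub>c \<rightarrow> 0\<close>, the product is asymptotic to \<open>exp (-(1 - z) \<Sum>\<^sub>c p\<^sub>c)\<close>: either the sums
  \<open>\<Sum>\<^sub>c p\<^sub>c\<close> stay bounded and converge to some \<open>\<lambda>\<close>, so that \<open>E z^N\<^sub>A = exp (-(1 - z) \<lambda>)\<close> is the
  Poisson generating function, or they are unbounded and \<open>N\<^sub>A = \<infinity>\<close> almost surely.
  Otherwise a Koenig argument yields a decreasing chain of cells, each met with probability
  at least \<open>\<epsilon> > 0\<close>, shrinking to at most one point, which \<open>\<pi>\<close> almost surely misses. The events
  "\<open>\<pi>\<close> meets the \<open>j\<close>-th ring of the chain" are independent, so by the Borel 0-1 law \<open>\<pi>\<close>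
  almost surely meets infinitely many rings, and again \<open>N\<^sub>A = \<infinity>\<close>.
\<close>

lemma sets_pair_measure_countably_determined:
  assumes "E \<in> sets (M \<Otimes>\<^sub>M N)"
  obtains R :: "nat \<Rightarrow> 'a set" where "\<And>i. R i \<in> sets M"
    and "\<And>x y z. x \<in> space M \<Longrightarrow> y \<in> space M \<Longrightarrow> z \<in> space N \<Longrightarrow>
           (\<And>i. x \<in> R i \<longleftrightarrow> y \<in> R i) \<Longrightarrow> (x, z) \<in> E \<longleftrightarrow> (y, z) \<in> E"
proof -
  define determined where "determined E R \<longleftrightarrow> (\<forall>i. R i \<in> sets M) \<and>
    (\<forall>x\<in>space M. \<forall>y\<in>space M. \<forall>z\<in>space N. (\<forall>i. x \<in> R i \<longleftrightarrow> y \<in> R i) \<longrightarrow> ((x, z) \<in> E \<longleftrightarrow> (y, z) \<in> E))"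
    for E and R :: "nat \<Rightarrow> 'a set"
  have "E \<in> sigma_sets (space M \<times> space N) {a \<times> b | a b. a \<in> sets M \<and> b \<in> sets N}"
    using assms by (simp add: sets_pair_measure)
  then have "\<exists>R. determined E R"
  proof induct
    case (Basic E)
    then obtain a b where "E = a \<times> b" "a \<in> sets M" by blast
    then have "determined E (\<lambda>_. a)" by (auto simp: determined_def)
    then show ?case by blast
  next
    case Empty
    have "determined {} (\<lambda>_. {})" by (simp add: determined_def)
    then show ?case by blast
  next
    case (Compl E)
    then obtain R where "determined E R" by blast
    then have "determined (space M \<times> space N - E) R"
      unfolding determined_def by (metis Diff_iff mem_Sigma_iff)
    then show ?case by blast
  next
    case (Union E)
    then obtain R where R: "\<And>n. determined (E n) (R n)" by metis
    \<comment> \<open>The countably many countable families are merged into one by a pairing function.\<close>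
    define R' where "R' k = case_prod R (prod_decode k)" for k
    have "determined (\<Union>n. E n) R'"
      unfolding determined_def
    proof (intro conjI ballI impI)
      show "\<forall>k. R' k \<in> sets M" using R by (simp add: determined_def R'_def split: prod.split)
      fix x y z assume xyz: "x \<in> space M" "y \<in> space M" "z \<in> space N" "\<forall>k. x \<in> R' k \<longleftrightarrow> y \<in> R' k"
      have "\<forall>i. x \<in> R n i \<longleftrightarrow> y \<in> R n i" for n
        using xyz(4) by (metis R'_def case_prod_conv prod_encode_inverse)
      then have "(x, z) \<in> E n \<longleftrightarrow> (y, z) \<in> E n" for n
        using R[of n] xyz(1-3) unfolding determined_def by blast
      then show "(x, z) \<in> (\<Union>n. E n) \<longleftrightarrow> (y, z) \<in> (\<Union>n. E n)" by blast
    qed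
    then show ?case by blast
  qed
  then show thesis using that unfolding determined_def by blast
qed

lemma separating_family_of_measurable_diagonal:
  assumes "{(x, x) | x. x \<in> space M} \<in> sets (M \<Otimes>\<^sub>M M)"
  obtains B :: "nat \<Rightarrow> 'a set" where "\<And>i. B i \<in> sets M"
    and "\<And>x y. x \<in> space M \<Longrightarrow> y \<in> space M \<Longrightarrow> (\<And>i. x \<in> B i \<longleftrightarrow> y \<in> B i) \<Longrightarrow> x = y"
proof -
  obtain B :: "nat \<Rightarrow> 'a set" where B: "\<And>i. B i \<in> sets M"
    and determined: "\<And>x y z. x \<in> space M \<Longrightarrow> y \<in> space M \<Longrightarrow> z \<in> space M \<Longrightarrow>
      (\<And>i. x \<in> B i \<longleftrightarrow> y \<in> B i) \<Longrightarrow>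
      (x, z) \<in> {(x, x) | x. x \<in> space M} \<longleftrightarrow> (y, z) \<in> {(x, x) | x. x \<in> space M}"
    using sets_pair_measure_countably_determined[OF assms] by blast
  show thesis
  proof (rule that[OF B])
    fix x y assume "x \<in> space M" "y \<in> space M" "\<And>i. x \<in> B i \<longleftrightarrow> y \<in> B i"
    from determined[OF this(2,1,1)] this show "x = y" by auto
  qed
qed

lemma (in prob_space) indep_sets_reindex:
  assumes "inj_on f K" "indep_sets (\<lambda>k. F (f k)) K"
  shows "indep_sets F (f ` K)"
proof (rule indep_setsI)
  show "F i \<subseteq> events" if "i \<in> f ` K" for i
    using that assms(2) unfolding indep_sets_def by auto
next
  fix A J assume J: "J \<noteq> {}" "J \<subseteq> f ` K" "finite J" and A: "\<forall>j\<in>J. A j \<in> F j"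
  define J' where "J' = f -` J \<inter> K"
  have im: "f ` J' = J" using J(2) by (auto simp: J'_def)
  have inj: "inj_on f J'" using assms(1) by (rule inj_on_subset) (auto simp: J'_def)
  have "finite J'" using J(3) im inj finite_imageD by blast
  then have "prob (\<Inter>j\<in>J'. A (f j)) = (\<Prod>j\<in>J'. prob (A (f j)))"
    using J im A by (intro indep_setsD[OF assms(2)]) (auto simp: J'_def)
  moreover have "(\<Inter>j\<in>J. A j) = (\<Inter>j\<in>J'. A (f j))" using im by auto
  ultimately show "prob (\<Inter>j\<in>J. A j) = (\<Prod>j\<in>J. prob (A j))"
    using prod.reindex[OF inj, of "\<lambda>j. prob (A j)"] im by simp
qed

lemma (in prob_space) indep_vars_reindex:
  assumes "inj_on f K" "indep_vars (\<lambda>k. M' (f k)) (\<lambda>k. X (f k)) K"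
  shows "indep_vars M' X (f ` K)"
  using assms(2) unfolding indep_vars_def2
  by (auto intro!: indep_sets_reindex[OF assms(1)])

lemma prod_one_minus_le_exp_sum:
  fixes p :: "'i \<Rightarrow> real"
  assumes "finite S" "\<And>i. i \<in> S \<Longrightarrow> 0 \<le> p i \<and> p i \<le> 1" "0 \<le> t" "t \<le> 1"
  shows "(\<Prod>i\<in>S. 1 - t * p i) \<le> exp (- t * (\<Sum>i\<in>S. p i))"
proof -
  have "(\<Prod>i\<in>S. 1 - t * p i) \<le> (\<Prod>i\<in>S. exp (- (t * p i)))"
  proof (rule prod_mono)
    fix i assume "i \<in> S"
    then have "t * p i \<le> 1" using assms by (simp add: mult_le_one)
    then show "0 \<le> 1 - t * p i \<and> 1 - t * p i \<le> exp (- (t * p i))"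
      using exp_ge_add_one_self[of "- (t * p i)"] by simp
  qed
  also have "\<dots> = exp (- t * (\<Sum>i\<in>S. p i))"
    by (simp add: exp_sum[OF assms(1), symmetric] sum_distrib_left sum_negf)
  finally show ?thesis .
qed

lemma exp_sum_le_prod_one_minus:
  fixes p :: "'i \<Rightarrow> real"
  assumes "finite S" "\<And>i. i \<in> S \<Longrightarrow> 0 \<le> p i \<and> p i \<le> e" "0 \<le> t" "t \<le> 1" "e \<le> 1/2"
  shows "exp (- t * (\<Sum>i\<in>S. p i) - 2 * e * (\<Sum>i\<in>S. p i)) \<le> (\<Prod>i\<in>S. 1 - t * p i)"
proof -
  have "exp (- t * (\<Sum>i\<in>S. p i) - 2 * e * (\<Sum>i\<in>S. p i)) = (\<Prod>i\<in>S. exp (- (t * p i) - 2 * e * p i))"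
    by (simp add: exp_sum[OF assms(1), symmetric] sum_subtractf sum_negf sum_distrib_left)
  also have "\<dots> \<le> (\<Prod>i\<in>S. 1 - t * p i)"
  proof (rule prod_mono)
    fix i assume i: "i \<in> S"
    define x where "x = t * p i"
    have "t * p i \<le> 1 * e" using assms(2)[OF i] assms(3,4) by (intro mult_mono) auto
    then have x: "0 \<le> x" "x \<le> e" using assms(2)[OF i] assms(3) by (simp_all add: x_def)
    have "x \<le> p i" using assms(2)[OF i] assms(3,4) by (simp add: x_def mult_left_le_one_le)
    then have "x\<^sup>2 \<le> e * p i" using x by (simp add: power2_eq_square mult_mono)
    then have "exp (- (t * p i) - 2 * e * p i) \<le> exp (- x - 2 * x\<^sup>2)" by (simp add: x_def)
    also have "\<dots> \<le> exp (ln (1 - x))"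
      unfolding exp_le_cancel_iff by (rule ln_one_minus_pos_lower_bound) (use x assms(5) in auto)
    also have "\<dots> = 1 - t * p i" using x assms(5) by (simp add: x_def)
    finally show "0 \<le> exp (- (t * p i) - 2 * e * p i) \<and> exp (- (t * p i) - 2 * e * p i) \<le> 1 - t * p i"
      by simp
  qed
  finally show ?thesis .
qed

lemma tendsto_prod_one_minus_minus_exp_sum:
  fixes p :: "nat \<Rightarrow> 'i \<Rightarrow> real"
  assumes fin: "\<And>m. finite (S m)" and nonneg: "\<And>m i. i \<in> S m \<Longrightarrow> 0 \<le> p m i"
    and vanish: "\<And>e. e > 0 \<Longrightarrow> eventually (\<lambda>m. \<forall>i\<in>S m. p m i \<le> e) sequentially"
    and bounded: "\<And>m. (\<Sum>i\<in>S m. p m i) \<le> K" and t: "0 \<le> t" "t \<le> 1"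
  shows "(\<lambda>m. (\<Prod>i\<in>S m. 1 - t * p m i) - exp (- t * (\<Sum>i\<in>S m. p m i))) \<longlonglongrightarrow> 0"
proof (rule LIMSEQ_I)
  fix r :: real assume r: "0 < r"
  have K: "0 \<le> K" using bounded[of 0] sum_nonneg[of "S 0" "p 0"] nonneg by force
  define e where "e = min (1/2) (r / (2 * (K + 1)))"
  have e: "0 < e" "e \<le> 1/2" using r K unfolding e_def by (simp, simp only: min.cobounded1)
  have "2 * e * K \<le> 2 * (r / (2 * (K + 1))) * K" using K by (intro mult_right_mono) (auto simp: e_def)
  also have "\<dots> = r * (K / (K + 1))" using K by (simp add: field_simps)
  also have "\<dots> < r * 1" using K r by (intro mult_strict_left_mono) auto
  finally have eK: "2 * e * K < r" by simp
  obtain N where N: "\<And>m i. m \<ge> N \<Longrightarrow> i \<in> S m \<Longrightarrow> p m i \<le> e"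
    using vanish[OF e(1)] by (auto simp: eventually_sequentially)
  show "\<exists>N. \<forall>m\<ge>N. norm ((\<Prod>i\<in>S m. 1 - t * p m i) - exp (- t * (\<Sum>i\<in>S m. p m i)) - 0) < r"
  proof (intro exI allI impI)
    fix m assume "N \<le> m"
    define s where "s = (\<Sum>i\<in>S m. p m i)"
    have s: "0 \<le> s" "s \<le> K" using nonneg bounded by (auto simp: s_def intro: sum_nonneg)
    have p: "\<And>i. i \<in> S m \<Longrightarrow> 0 \<le> p m i \<and> p m i \<le> e" using N[OF \<open>N \<le> m\<close>] nonneg by blast
    have lower: "exp (- t * s - 2 * e * s) \<le> (\<Prod>i\<in>S m. 1 - t * p m i)"
      unfolding s_def by (rule exp_sum_le_prod_one_minus[OF fin p t e(2)])
    have upper: "(\<Prod>i\<in>S m. 1 - t * p m i) \<le> exp (- t * s)"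
      unfolding s_def using p e(2) by (intro prod_one_minus_le_exp_sum[OF fin _ t]) force
    have "exp (- t * s) - exp (- t * s - 2 * e * s) = exp (- t * s) * (1 - exp (- (2 * e * s)))"
      by (simp add: algebra_simps flip: exp_add)
    also have "\<dots> \<le> 1 * (2 * e * s)"
      using exp_ge_add_one_self[of "- (2 * e * s)"] s t e
      by (intro mult_mono) (auto simp: mult_nonneg_nonneg)
    also have "\<dots> \<le> 2 * e * K" using s e by simp
    finally show "norm ((\<Prod>i\<in>S m. 1 - t * p m i) - exp (- t * (\<Sum>i\<in>S m. p m i)) - 0) < r"
      using lower upper eK by (simp add: s_def)
  qed
qed

lemma powser_coefficients_unique:
  fixes a b :: "nat \<Rightarrow> real"
  assumes summable_a: "\<And>x. \<bar>x\<bar> < 1 \<Longrightarrow> summable (\<lambda>n. a n * x ^ n)"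
    and summable_b: "\<And>x. \<bar>x\<bar> < 1 \<Longrightarrow> summable (\<lambda>n. b n * x ^ n)"
    and eq: "\<And>x. 0 < x \<Longrightarrow> x < 1 \<Longrightarrow> (\<Sum>n. a n * x ^ n) = (\<Sum>n. b n * x ^ n)"
  shows "a = b"
proof -
  define c where "c n = a n - b n" for n
  have sums_c: "(\<lambda>n. c n * x ^ n) sums ((\<Sum>n. a n * x ^ n) - (\<Sum>n. b n * x ^ n))" if "\<bar>x\<bar> < 1" for x
    unfolding c_def left_diff_distrib
    by (intro sums_diff summable_sums summable_a summable_b that)
  have "c n = 0" for n
  proof (induction n rule: less_induct)
    case (less n)
    \<comment> \<open>The lower coefficients vanish, so \<open>c n\<close> is the limit at \<open>0\<close> of \<open>x\<^sup>-\<^sup>n \<Sum>c\<^sub>j x\<^sup>j\<close>, which vanishes for \<open>0 < x < 1\<close>.\<close>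
    define F where "F x = (\<Sum>j. c j * x ^ j) / x ^ n" for x :: real
    have shifted: "(\<lambda>k. c (k + n) * x ^ k) sums F x" if "x \<noteq> 0" "norm x < 1" for x
    proof -
      have "(\<lambda>k. c (k + n) * x ^ (k + n)) sums (\<Sum>j. c j * x ^ j)"
        using sums_iff_shift[of "\<lambda>j. c j * x ^ j" n] sums_c[of x] less that
        by (simp add: sums_iff)
      from sums_divide[OF this, of "x ^ n"] show ?thesis
        using that by (simp add: F_def power_add)
    qed
    have "(F \<longlongrightarrow> c n) (at_right 0)"
      using powser_limit_0_strong[of 1, OF _ shifted] by (simp add: filterlim_at_split)
    moreover have "eventually (\<lambda>x. F x = 0) (at_right (0::real))"
      unfolding eventually_at_right[OF zero_less_one]
      using sums_c eq by (auto simp: F_def sums_iff intro!: exI[of _ 1])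
    then have "(F \<longlongrightarrow> 0) (at_right 0)" by (rule tendsto_eventually)
    ultimately show ?case by (rule tendsto_unique[rotated]) simp
  qed
  then show ?thesis by (simp add: c_def fun_eq_iff)
qed

lemma poisson_pgf_sums:
  fixes c z :: real
  shows "(\<lambda>k. c ^ k / fact k * exp (- c) * z ^ k) sums exp (- (1 - z) * c)"
proof -
  have "(\<lambda>k. exp (- c) * ((z * c) ^ k /\<^sub>R fact k)) sums (exp (- c) * exp (z * c))"
    by (rule sums_mult[OF exp_converges])
  moreover have "exp (- c) * exp (z * c) = exp (- (1 - z) * c)"
    by (simp add: exp_add[symmetric] algebra_simps)
  ultimately show ?thesis
    by (simp add: power_mult_distrib divide_inverse ac_simps)
qed

definition enat_power :: "real \<Rightarrow> enat \<Rightarrow> real" where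
  "enat_power z n = (case n of enat k \<Rightarrow> z ^ k | \<infinity> \<Rightarrow> 0)"

lemma enat_power_nonneg: "0 \<le> z \<Longrightarrow> 0 \<le> enat_power z n"
  by (simp add: enat_power_def split: enat.split)

lemma enat_power_le_one: "0 \<le> z \<Longrightarrow> z \<le> 1 \<Longrightarrow> enat_power z n \<le> 1"
  by (simp add: enat_power_def power_le_one split: enat.split)

lemma enat_power_eq_sum_indicators:
  "(\<lambda>k. z ^ k * indicator {enat k} n) sums enat_power z n"
proof (cases n)
  case (enat j)
  have "(\<lambda>k. z ^ k * indicator {enat k} n) = (\<lambda>k. if k = j then z ^ k else 0)"
    using enat by (auto simp: indicator_def)
  then show ?thesis using sums_single[of j "\<lambda>k. z ^ k"] enat by (simp add: enat_power_def)
qed (simp add: enat_power_def)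

context prob_space
begin

lemma enat_power_expectation_sums:
  fixes X :: "'a \<Rightarrow> enat"
  assumes X: "X \<in> measurable M (count_space UNIV)" and z: "0 \<le> z" "z \<le> 1"
  shows "(\<lambda>k. prob {\<omega> \<in> space M. X \<omega> = enat k} * z ^ k) sums expectation (\<lambda>\<omega>. enat_power z (X \<omega>))"
proof -
  define f where "f k \<omega> = z ^ k * indicator {\<omega> \<in> space M. X \<omega> = enat k} \<omega>" for k \<omega>
  have events: "{\<omega> \<in> space M. X \<omega> = enat k} \<in> events" for k
    using X by measurable
  have f_sums: "(\<lambda>k. f k \<omega>) sums enat_power z (X \<omega>)" if "\<omega> \<in> space M" for \<omega>
    using enat_power_eq_sum_indicators[of z "X \<omega>"] that by (simp add: f_def indicator_def)
  have f_int: "integrable M (f k)" for k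
    unfolding f_def using events by (intro integrable_mult_right integrable_real_indicator) (auto simp: less_top[symmetric])
  have partial_sums_bounded: "norm (\<Sum>k<n. f k \<omega>) \<le> 1" if "\<omega> \<in> space M" for n \<omega>
  proof -
    have f_nonneg: "0 \<le> f k \<omega>" for k using z by (simp add: f_def)
    have "(\<Sum>k<n. f k \<omega>) \<le> enat_power z (X \<omega>)"
      using f_sums[OF that] f_nonneg sum_le_suminf[of "\<lambda>k. f k \<omega>" "{..<n}"] by (simp add: sums_iff)
    also have "\<dots> \<le> 1" using z by (rule enat_power_le_one)
    finally show ?thesis using f_nonneg by (simp add: sum_nonneg)
  qed
  have "(\<lambda>n. expectation (\<lambda>\<omega>. \<Sum>k<n. f k \<omega>)) \<longlonglongrightarrow> expectation (\<lambda>\<omega>. enat_power z (X \<omega>))"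
    using X f_int f_sums partial_sums_bounded
    by (intro integral_dominated_convergence[where w="\<lambda>_. 1"])
       (auto simp: sums_def intro!: borel_measurable_sum)
  moreover have "expectation (\<lambda>\<omega>. \<Sum>k<n. f k \<omega>) = (\<Sum>k<n. prob {\<omega> \<in> space M. X \<omega> = enat k} * z ^ k)" for n
  proof -
    have "expectation (\<lambda>\<omega>. \<Sum>k<n. f k \<omega>) = (\<Sum>k<n. expectation (f k))"
      using f_int by (rule Bochner_Integration.integral_sum)
    also have "\<dots> = (\<Sum>k<n. prob {\<omega> \<in> space M. X \<omega> = enat k} * z ^ k)"
    proof (rule sum.cong[OF refl])
      fix k
      have "expectation (f k) = z ^ k * prob {\<omega> \<in> space M. X \<omega> = enat k}"
        unfolding f_def using events[of k] by simp
      then show "expectation (f k) = prob {\<omega> \<in> space M. X \<omega> = enat k} * z ^ k" by simp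
    qed
    finally show ?thesis .
  qed
  ultimately show ?thesis by (simp add: sums_def)
qed

lemma prob_finite_values_sums:
  fixes X :: "'a \<Rightarrow> enat"
  assumes X: "X \<in> measurable M (count_space UNIV)"
  shows "(\<lambda>k. prob {\<omega> \<in> space M. X \<omega> = enat k}) sums prob {\<omega> \<in> space M. X \<omega> \<noteq> \<infinity>}"
proof -
  have "(\<lambda>k. prob {\<omega> \<in> space M. X \<omega> = enat k}) sums prob (\<Union>k. {\<omega> \<in> space M. X \<omega> = enat k})"
    using X by (intro finite_measure_UNION) (auto simp: disjoint_family_on_def)
  moreover have "(\<Union>k. {\<omega> \<in> space M. X \<omega> = enat k}) = {\<omega> \<in> space M. X \<omega> \<noteq> \<infinity>}"
    by (auto simp: not_infinity_eq)
  ultimately show ?thesis by simp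
qed

lemma AE_infinite_if_enat_power_expectation_zero:
  fixes X :: "'a \<Rightarrow> enat"
  assumes X: "X \<in> measurable M (count_space UNIV)" and z: "0 < z" "z \<le> 1"
    and zero: "expectation (\<lambda>\<omega>. enat_power z (X \<omega>)) = 0"
  shows "AE \<omega> in M. X \<omega> = \<infinity>"
proof -
  have "(\<lambda>k. prob {\<omega> \<in> space M. X \<omega> = enat k} * z ^ k) sums 0"
    using enat_power_expectation_sums[OF X, of z] z zero by simp
  then have "prob {\<omega> \<in> space M. X \<omega> = enat k} * z ^ k = 0" for k
    using suminf_eq_zero_iff[of "\<lambda>k. prob {\<omega> \<in> space M. X \<omega> = enat k} * z ^ k"] z
    by (simp add: sums_iff)
  then have "prob {\<omega> \<in> space M. X \<omega> \<noteq> \<infinity>} = 0"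
    using prob_finite_values_sums[OF X] z by (simp add: sums_iff)
  then show ?thesis
    using X by (subst AE_iff_measurable[OF _ refl]) (auto simp: emeasure_eq_measure)
qed

lemma poisson_distribution_if_AE_infinite:
  fixes X :: "'a \<Rightarrow> enat"
  assumes X: "X \<in> measurable M (count_space UNIV)" and infinite: "AE \<omega> in M. X \<omega> = \<infinity>"
  shows "poisson_distribution (distr M (count_space UNIV) X)"
proof -
  have "distr M (count_space UNIV) X = distr M (count_space UNIV) (\<lambda>_. \<infinity>)"
    using X infinite by (intro distr_cong_AE) auto
  then show ?thesis by (simp add: poisson_distribution_def)
qed

lemma poisson_distribution_if_enat_power_expectation:
  fixes X :: "'a \<Rightarrow> enat"
  assumes X: "X \<in> measurable M (count_space UNIV)" and "0 \<le> c"
    and pgf: "\<And>z. 0 \<le> z \<Longrightarrow> z < 1 \<Longrightarrow> expectation (\<lambda>\<omega>. enat_power z (X \<omega>)) = exp (- (1 - z) * c)"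
  shows "poisson_distribution (distr M (count_space UNIV) X)"
proof -
  define q where "q k = prob {\<omega> \<in> space M. X \<omega> = enat k}" for k
  have "summable (\<lambda>k. q k * x ^ k)" if "\<bar>x\<bar> < 1" for x
  proof (rule summable_comparison_test)
    show "\<exists>N. \<forall>k\<ge>N. norm (q k * x ^ k) \<le> \<bar>x\<bar> ^ k"
      by (auto simp: q_def abs_mult power_abs intro!: mult_left_le_one_le)
  qed (use that in \<open>simp add: summable_geometric\<close>)
  moreover have "summable (\<lambda>k. c ^ k / fact k * exp (- c) * x ^ k)" for x
    using poisson_pgf_sums[of c x] by (simp add: sums_iff)
  moreover have "(\<Sum>k. q k * x ^ k) = (\<Sum>k. c ^ k / fact k * exp (- c) * x ^ k)" if "0 < x" "x < 1" for x
    using enat_power_expectation_sums[OF X, of x] poisson_pgf_sums[of c x] pgf[of x] that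
    by (simp add: q_def sums_iff)
  ultimately have "q = (\<lambda>k. c ^ k / fact k * exp (- c))"
    by (rule powser_coefficients_unique)
  moreover have "emeasure (distr M (count_space UNIV) X) {enat k} = ennreal (q k)" for k
    using X by (simp add: emeasure_distr emeasure_eq_measure q_def vimage_def Int_def conj_commute)
  ultimately show ?thesis
    using \<open>0 \<le> c\<close> by (auto simp: poisson_distribution_def fun_eq_iff)
qed

end

definition extendable :: "(bool list \<Rightarrow> bool) \<Rightarrow> bool list \<Rightarrow> bool" where
  "extendable Q s \<longleftrightarrow> (\<forall>m\<ge>length s. \<exists>s'. length s' = m \<and> take (length s) s' = s \<and> Q s')"

lemma extendableD: "extendable Q s \<Longrightarrow> Q s"
  unfolding extendable_def by (metis order_refl take_all)

lemma extendable_append: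
  assumes prefix_closed: "\<And>s k. Q s \<Longrightarrow> Q (take k s)" and "extendable Q s"
  shows "extendable Q (s @ [True]) \<or> extendable Q (s @ [False])"
proof (rule ccontr)
  assume "\<not> ?thesis"
  then have "\<exists>m\<ge>Suc (length s). \<forall>s'. length s' = m \<longrightarrow> take (Suc (length s)) s' = s @ [b] \<longrightarrow> \<not> Q s'" for b
    unfolding extendable_def by (cases b) auto
  then obtain mb where mb: "\<And>b. mb b \<ge> Suc (length s)"
    "\<And>b s'. length s' = mb b \<Longrightarrow> take (Suc (length s)) s' = s @ [b] \<Longrightarrow> \<not> Q s'"
    by metis
  \<comment> \<open>An extension of \<open>s\<close> of length \<open>max (mb True) (mb False)\<close> in \<open>Q\<close> has a prefix of length \<open>mb b\<close>
      outside \<open>Q\<close>, where \<open>b\<close> is its next letter.\<close>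
  have "max (mb True) (mb False) \<ge> length s" using mb(1)[of True] by simp
  then obtain s' where s': "length s' = max (mb True) (mb False)" "take (length s) s' = s" "Q s'"
    using \<open>extendable Q s\<close> unfolding extendable_def by blast
  define b where "b = s' ! length s"
  have "length s < length s'" using s'(1) mb(1)[of True] by simp
  then have "take (Suc (length s)) s' = s @ [b]"
    using take_Suc_conv_app_nth[of "length s" s'] s'(2) by (simp add: b_def)
  then have "take (Suc (length s)) (take (mb b) s') = s @ [b]"
    using mb(1)[of b] by (simp add: min_def)
  with mb(2) have "\<not> Q (take (mb b) s')"
    using s'(1) by (cases b) auto
  then show False using prefix_closed[OF s'(3)] by blast
qed

lemma binary_koenig:
  assumes prefix_closed: "\<And>s k. Q s \<Longrightarrow> Q (take k s)" and unbounded: "\<And>m. \<exists>s. length s = m \<and> Q s"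
  obtains f :: "nat \<Rightarrow> bool list"
  where "\<And>n. length (f n) = n" "\<And>n. take n (f (Suc n)) = f n" "\<And>n. Q (f n)"
proof -
  define f where "f = rec_nat [] (\<lambda>_ s. if extendable Q (s @ [True]) then s @ [True] else s @ [False])"
  have length: "length (f n) = n" for n by (induction n) (simp_all add: f_def)
  have "extendable Q []" using unbounded by (auto simp: extendable_def)
  then have "extendable Q (f n)" for n
    by (induction n) (use extendable_append[of Q, OF prefix_closed] in \<open>auto simp: f_def\<close>)
  moreover have "take n (f (Suc n)) = f n" for n using length[of n] by (simp add: f_def)
  ultimately show thesis using that length extendableD by blast
qed

lemma disjoint_family_rings:
  assumes "decseq D"
  shows "disjoint_family (\<lambda>j. D j - D (Suc j))"
proof -
  have "(D j - D (Suc j)) \<inter> (D i - D (Suc i)) = {}" if "i < j" for i j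
    using \<open>decseq D\<close> that by (auto simp: decseq_def dest!: Suc_leI)
  then show ?thesis unfolding disjoint_family_on_def by (metis Int_commute nat_neq_iff)
qed

lemma decseq_meets_infinitely_many_rings:
  assumes "decseq D" and meets: "\<And>n. X \<inter> D n \<noteq> {}" and "X \<inter> (\<Inter>n. D n) = {}"
  shows "infinite {j. X \<inter> (D j - D (Suc j)) \<noteq> {}}"
  unfolding infinite_nat_iff_unbounded_le
proof
  fix n
  obtain y where y: "y \<in> X" "y \<in> D n" using meets[of n] by blast
  then have "\<exists>k. y \<notin> D k" using assms(3) by blast
  define k where "k = (LEAST k. y \<notin> D k)"
  have "y \<notin> D k" unfolding k_def using \<open>\<exists>k. y \<notin> D k\<close> by (rule LeastI_ex)
  then have "n < k" using y(2) \<open>decseq D\<close> by (metis decseq_def not_le subsetD)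
  moreover have "y \<in> D (k - 1)"
    using not_less_Least[of "k - 1" "\<lambda>k. y \<notin> D k"] \<open>n < k\<close> by (simp add: k_def)
  moreover have "Suc (k - 1) = k" using \<open>n < k\<close> by simp
  ultimately have "k - 1 \<ge> n" "y \<in> X \<inter> (D (k - 1) - D (Suc (k - 1)))"
    using y(1) \<open>y \<notin> D k\<close> by auto
  then show "\<exists>j\<ge>n. j \<in> {j. X \<inter> (D j - D (Suc j)) \<noteq> {}}" by blast
qed

lemma infinite_if_meets_infinitely_many_disjoint:
  assumes "disjoint_family R" and "infinite {j. X \<inter> R j \<noteq> {}}"
  shows "infinite (X \<inter> (\<Union>j. R j))"
proof
  define J where "J = {j. X \<inter> R j \<noteq> {}}"
  define f where "f j = (SOME y. y \<in> X \<inter> R j)" for j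
  have f: "f j \<in> X \<inter> R j" if "j \<in> J" for j
  proof -
    have "\<exists>y. y \<in> X \<inter> R j" using that by (auto simp: J_def)
    then show ?thesis unfolding f_def by (rule someI_ex)
  qed
  have "inj_on f J"
  proof (rule inj_onI)
    fix i j assume "i \<in> J" "j \<in> J" "f i = f j"
    then have "f i \<in> R i \<inter> R j" using f[of i] f[of j] by simp
    then show "i = j" using \<open>disjoint_family R\<close> by (auto simp: disjoint_family_on_def)
  qed
  moreover assume "finite (X \<inter> (\<Union>j. R j))"
  then have "finite (f ` J)" by (rule finite_subset[rotated]) (use f in blast)
  ultimately show False using assms(2) finite_imageD unfolding J_def by blast
qed

lemma Ncount_eq_0_iff: "Ncount A X = 0 \<longleftrightarrow> X \<inter> A = {}"
  by (auto simp: Ncount_def zero_enat_def Int_commute)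

lemma space_CS: "space (CS M) = countable_subsets M"
  unfolding CS_def by (rule space_measure_of_conv)

locale cr_process = prob_space P for P :: "'b measure" +
  fixes M :: "'a measure" and \<pi> :: "'b \<Rightarrow> 'a set"
  assumes cr_set: "cr_set P M \<pi>" and independent_increments: "independent_increments P M \<pi>"
begin

lemma cr_process_in_countable_subsets: "\<omega> \<in> space P \<Longrightarrow> \<pi> \<omega> \<in> countable_subsets M"
  using measurable_space[OF cr_set[unfolded cr_set_def]] by (simp add: space_CS)

lemma cr_process_subset_space: "\<omega> \<in> space P \<Longrightarrow> \<pi> \<omega> \<subseteq> space M"
  using cr_process_in_countable_subsets by (simp add: countable_subsets_def)

lemma measurable_Ncount:
  assumes "A \<in> sets M"
  shows "(\<lambda>\<omega>. Ncount A (\<pi> \<omega>)) \<in> measurable P (count_space UNIV)"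
proof (rule measurableI)
  fix B :: "enat set"
  define G where "G = {X \<in> countable_subsets M. Ncount A X \<in> B}"
  have "G \<in> sets (CS M)"
    unfolding CS_def G_def using assms
    by (subst sets_measure_of) (auto simp: countable_subsets_def intro!: sigma_sets.Basic)
  from measurable_sets[OF cr_set[unfolded cr_set_def] this]
  have "\<pi> -` G \<inter> space P \<in> events" .
  moreover have "\<pi> -` G \<inter> space P = (\<lambda>\<omega>. Ncount A (\<pi> \<omega>)) -` B \<inter> space P"
    using cr_process_in_countable_subsets by (auto simp: G_def)
  ultimately show "(\<lambda>\<omega>. Ncount A (\<pi> \<omega>)) -` B \<inter> space P \<in> events" by simp
qed simp

lemma sets_meets: "A \<in> sets M \<Longrightarrow> {\<omega> \<in> space P. \<pi> \<omega> \<inter> A \<noteq> {}} \<in> events"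
proof -
  assume "A \<in> sets M"
  from measurable_sets[OF measurable_Ncount[OF this], of "- {0}"]
  have "(\<lambda>\<omega>. Ncount A (\<pi> \<omega>)) -` (- {0}) \<inter> space P \<in> events" by simp
  moreover have "(\<lambda>\<omega>. Ncount A (\<pi> \<omega>)) -` (- {0}) \<inter> space P = {\<omega> \<in> space P. \<pi> \<omega> \<inter> A \<noteq> {}}"
    by (auto simp: Ncount_eq_0_iff)
  ultimately show ?thesis by simp
qed

lemma indep_vars_Ncount_finite:
  assumes "finite I" "\<And>i. i \<in> I \<Longrightarrow> D i \<in> sets M" "disjoint_family_on D I"
  shows "indep_vars (\<lambda>_. count_space UNIV) (\<lambda>i \<omega>. Ncount (D i) (\<pi> \<omega>)) I"
proof -
  obtain h where h: "bij_betw h {..<card I} I"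
    using ex_bij_betw_nat_finite[OF assms(1)] unfolding atLeast0LessThan by blast
  have "D (h k) \<in> sets M" if "k < card I" for k
    using that h assms(2) by (auto simp: bij_betw_def)
  moreover have "disjoint_family_on (\<lambda>k. D (h k)) {..<card I}"
    unfolding disjoint_family_on_def
  proof (intro ballI impI)
    fix k l assume "k \<in> {..<card I}" "l \<in> {..<card I}" "k \<noteq> l"
    then have "h k \<noteq> h l" "h k \<in> I" "h l \<in> I" using h by (auto simp: bij_betw_def inj_on_def)
    then show "D (h k) \<inter> D (h l) = {}" using assms(3) by (auto simp: disjoint_family_on_def)
  qed
  ultimately have "indep_vars (\<lambda>_. count_space UNIV) (\<lambda>k \<omega>. Ncount (D (h k)) (\<pi> \<omega>)) {..<card I}"
    using independent_increments unfolding independent_increments_def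
    by (elim allE[of _ "card I"] allE[of _ "\<lambda>k. D (h k)"]) simp
  then show ?thesis
    using indep_vars_reindex[of h "{..<card I}"] h by (simp add: bij_betw_def)
qed

lemma indep_vars_Ncount:
  assumes "\<And>i. i \<in> I \<Longrightarrow> D i \<in> sets M" "disjoint_family_on D I"
  shows "indep_vars (\<lambda>_. count_space UNIV) (\<lambda>i \<omega>. Ncount (D i) (\<pi> \<omega>)) I"
proof -
  have "indep_vars (\<lambda>_. count_space UNIV) (\<lambda>i \<omega>. Ncount (D i) (\<pi> \<omega>)) J" if "J \<subseteq> I" "finite J" for J
    using that assms by (intro indep_vars_Ncount_finite) (auto simp: disjoint_family_on_def subset_iff)
  then show ?thesis
    unfolding indep_vars_def2 using assms(1)
    by (subst indep_sets_finite_index_sets) (auto simp: measurable_Ncount)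
qed

lemma indep_events_meets:
  assumes "\<And>i. i \<in> I \<Longrightarrow> D i \<in> sets M" "disjoint_family_on D I"
  shows "indep_events (\<lambda>i. {\<omega> \<in> space P. \<pi> \<omega> \<inter> D i \<noteq> {}}) I"
  using indep_eventsI_indep_vars[OF indep_vars_Ncount[OF assms], of "\<lambda>_ n. n \<noteq> 0"]
  by (simp add: Ncount_eq_0_iff)

lemma prob_meets_all_ge:
  assumes "decseq D" "\<And>n. D n \<in> sets M" and hit: "\<And>n. e \<le> prob {\<omega> \<in> space P. \<pi> \<omega> \<inter> D n \<noteq> {}}"
  shows "e \<le> prob {\<omega> \<in> space P. \<forall>n. \<pi> \<omega> \<inter> D n \<noteq> {}}"
proof -
  have "(\<lambda>n. prob {\<omega> \<in> space P. \<pi> \<omega> \<inter> D n \<noteq> {}}) \<longlonglongrightarrow> prob (\<Inter>n. {\<omega> \<in> space P. \<pi> \<omega> \<inter> D n \<noteq> {}})"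
  proof (rule finite_Lim_measure_decseq)
    show "range (\<lambda>n. {\<omega> \<in> space P. \<pi> \<omega> \<inter> D n \<noteq> {}}) \<subseteq> events"
      using sets_meets[OF assms(2)] by blast
    show "decseq (\<lambda>n. {\<omega> \<in> space P. \<pi> \<omega> \<inter> D n \<noteq> {}})"
    proof (rule decseq_SucI)
      fix n show "{\<omega> \<in> space P. \<pi> \<omega> \<inter> D (Suc n) \<noteq> {}} \<subseteq> {\<omega> \<in> space P. \<pi> \<omega> \<inter> D n \<noteq> {}}"
        using decseq_SucD[OF \<open>decseq D\<close>, of n] by blast
    qed
  qed
  then have "e \<le> prob (\<Inter>n. {\<omega> \<in> space P. \<pi> \<omega> \<inter> D n \<noteq> {}})"
    using hit by (intro LIMSEQ_le_const) auto
  also have "(\<Inter>n. {\<omega> \<in> space P. \<pi> \<omega> \<inter> D n \<noteq> {}}) = {\<omega> \<in> space P. \<forall>n. \<pi> \<omega> \<inter> D n \<noteq> {}}"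
    by blast
  finally show ?thesis .
qed

end

locale diffuse_cr_process = cr_process +
  assumes no_atoms: "x \<in> space M \<Longrightarrow> prob {\<omega> \<in> space P. x \<in> \<pi> \<omega>} = 0"
begin

lemma AE_not_meets_subsingleton:
  assumes "C \<in> sets M" and subsingleton: "\<And>x y. x \<in> C \<Longrightarrow> y \<in> C \<Longrightarrow> x = y"
  shows "AE \<omega> in P. \<pi> \<omega> \<inter> C = {}"
proof (cases "C = {}")
  case False
  then obtain x where "C = {x}" using subsingleton by blast
  moreover have "x \<in> space M" using \<open>C = {x}\<close> sets.sets_into_space[OF assms(1)] by blast
  ultimately have "prob {\<omega> \<in> space P. \<pi> \<omega> \<inter> C \<noteq> {}} = 0" using no_atoms by simp
  moreover have "{\<omega> \<in> space P. \<pi> \<omega> \<inter> C \<noteq> {}} \<in> events" using assms(1) by (rule sets_meets)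
  ultimately show ?thesis by (simp add: prob_eq_0)
qed simp

lemma AE_infinite_if_shrinking_sets_hit:
  assumes "decseq D" and D: "\<And>n. D n \<in> sets M"
    and subsingleton: "\<And>x y. x \<in> (\<Inter>n. D n) \<Longrightarrow> y \<in> (\<Inter>n. D n) \<Longrightarrow> x = y"
    and "0 < e" and hit: "\<And>n. e \<le> prob {\<omega> \<in> space P. \<pi> \<omega> \<inter> D n \<noteq> {}}"
  shows "AE \<omega> in P. infinite (\<pi> \<omega> \<inter> D 0)"
proof -
  define ring where "ring j = D j - D (Suc j)" for j
  have ring_sets: "ring j \<in> sets M" for j using D by (simp add: ring_def sets.Diff)
  have ring_disjoint: "disjoint_family ring"
    unfolding ring_def using \<open>decseq D\<close> by (rule disjoint_family_rings)
  define H where "H = {\<omega> \<in> space P. \<forall>n. \<pi> \<omega> \<inter> D n \<noteq> {}}"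
  have "H \<in> events" unfolding H_def by (intro sets.sets_Collect_countable_All sets_meets D)
  moreover have "e \<le> prob H" unfolding H_def by (rule prob_meets_all_ge[OF \<open>decseq D\<close> D hit])
  ultimately have H_not_null: "\<not> (AE \<omega> in P. \<omega> \<notin> H)"
    using \<open>0 < e\<close> by (simp add: prob_eq_0[symmetric])
  have "(\<Inter>n. D n) \<in> sets M" using D by blast
  then have "AE \<omega> in P. \<pi> \<omega> \<inter> (\<Inter>n. D n) = {}"
    using subsingleton by (rule AE_not_meets_subsingleton)
  then have meets_rings: "AE \<omega> in P. \<omega> \<in> H \<longrightarrow> infinite {j. \<pi> \<omega> \<inter> ring j \<noteq> {}}"
  proof eventually_elim
    case (elim \<omega>)
    show ?case unfolding ring_def
      using decseq_meets_infinitely_many_rings[OF \<open>decseq D\<close> _ elim] by (auto simp: H_def)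
  qed
  have "indep_events (\<lambda>j. {\<omega> \<in> space P. \<pi> \<omega> \<inter> ring j \<noteq> {}}) UNIV"
    by (rule indep_events_meets[OF ring_sets ring_disjoint])
  then have "(AE \<omega> in P. infinite {j. \<pi> \<omega> \<inter> ring j \<noteq> {}}) \<or> (AE \<omega> in P. finite {j. \<pi> \<omega> \<inter> ring j \<noteq> {}})"
    by (rule borel_0_1_law_AE)
  moreover have "\<not> (AE \<omega> in P. finite {j. \<pi> \<omega> \<inter> ring j \<noteq> {}})"
  proof
    assume "AE \<omega> in P. finite {j. \<pi> \<omega> \<inter> ring j \<noteq> {}}"
    with meets_rings have "AE \<omega> in P. \<omega> \<notin> H" by eventually_elim blast
    with H_not_null show False ..
  qed
  ultimately have "AE \<omega> in P. infinite {j. \<pi> \<omega> \<inter> ring j \<noteq> {}}" by blast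
  then show ?thesis
  proof eventually_elim
    case (elim \<omega>)
    then have "infinite (\<pi> \<omega> \<inter> (\<Union>j. ring j))"
      by (rule infinite_if_meets_infinitely_many_disjoint[OF ring_disjoint])
    moreover have "(\<Union>j. ring j) \<subseteq> D 0" using \<open>decseq D\<close> by (auto simp: ring_def decseq_def)
    ultimately show ?case by (meson Int_mono finite_subset order_refl)
  qed
qed

end

locale separating_cells =
  fixes M :: "'a measure" and B :: "nat \<Rightarrow> 'a set" and A :: "'a set"
  assumes sets_B: "\<And>i. B i \<in> sets M"
    and separating: "\<And>x y. x \<in> space M \<Longrightarrow> y \<in> space M \<Longrightarrow> (\<And>i. x \<in> B i \<longleftrightarrow> y \<in> B i) \<Longrightarrow> x = y"
    and sets_A: "A \<in> sets M"
begin

definition code :: "nat \<Rightarrow> 'a \<Rightarrow> bool list" where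
  "code m x = map (\<lambda>i. x \<in> B i) [0..<m]"

definition codes :: "nat \<Rightarrow> bool list set" where
  "codes m = {bs. length bs = m}"

definition cell :: "bool list \<Rightarrow> 'a set" where
  "cell bs = {x \<in> A. code (length bs) x = bs}"

lemma finite_codes: "finite (codes m)"
  using finite_lists_length_eq[of "UNIV :: bool set" m] by (simp add: codes_def)

lemma length_code[simp]: "length (code m x) = m"
  by (simp add: code_def)

lemma mem_cell_iff: "x \<in> cell bs \<longleftrightarrow> x \<in> A \<and> (\<forall>i<length bs. x \<in> B i \<longleftrightarrow> bs ! i)"
proof -
  have "code (length bs) x = bs \<longleftrightarrow> (\<forall>i<length bs. x \<in> B i \<longleftrightarrow> bs ! i)"
    unfolding code_def list_eq_iff_nth_eq by simp
  then show ?thesis by (simp add: cell_def)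
qed

lemma cell_subset: "cell bs \<subseteq> A"
  by (auto simp: cell_def)

lemma cell_Nil: "cell [] = A"
  by (simp add: mem_cell_iff set_eq_iff)

lemma cell_subset_take: "cell bs \<subseteq> cell (take k bs)"
  by (auto simp: mem_cell_iff)

lemma sets_cell: "cell bs \<in> sets M"
proof (cases "bs = []")
  case False
  have "{x \<in> space M. x \<in> B i \<longleftrightarrow> bs ! i} = (if bs ! i then B i else space M - B i)" for i
    using sets.sets_into_space[OF sets_B] by auto
  then have "{x \<in> space M. x \<in> B i \<longleftrightarrow> bs ! i} \<in> sets M" for i
    using sets_B by simp
  then have "A \<inter> (\<Inter>i\<in>{..<length bs}. {x \<in> space M. x \<in> B i \<longleftrightarrow> bs ! i}) \<in> sets M"
    using sets_A False by (intro sets.Int sets.finite_INT) auto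
  moreover have "cell bs = A \<inter> (\<Inter>i\<in>{..<length bs}. {x \<in> space M. x \<in> B i \<longleftrightarrow> bs ! i})"
    using sets.sets_into_space[OF sets_A] unfolding set_eq_iff mem_cell_iff by blast
  ultimately show ?thesis by simp
qed (simp add: cell_Nil sets_A)

lemma disjoint_cells: "disjoint_family_on cell (codes m)"
  by (auto simp: disjoint_family_on_def cell_def codes_def)

lemma meets_cell_iff: "bs \<in> codes m \<Longrightarrow> X \<inter> cell bs \<noteq> {} \<longleftrightarrow> bs \<in> code m ` (X \<inter> A)"
  by (force simp: cell_def codes_def)

lemma finite_code_image: "finite (code m ` Y)"
  by (rule finite_subset[OF _ finite_codes]) (auto simp: codes_def)

lemma power_card_code_image_eq_prod:
  fixes z :: real
  shows "z ^ card (code m ` (X \<inter> A)) = (\<Prod>bs\<in>codes m. if X \<inter> cell bs = {} then 1 else z)"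
proof -
  have "code m ` (X \<inter> A) \<subseteq> codes m" by (auto simp: codes_def)
  then have "(\<Prod>bs\<in>codes m. if bs \<in> code m ` (X \<inter> A) then z else 1) = z ^ card (code m ` (X \<inter> A))"
    by (simp add: prod.inter_restrict[symmetric, OF finite_codes] Int_absorb1)
  moreover have "(\<Prod>bs\<in>codes m. if X \<inter> cell bs = {} then 1 else z) =
      (\<Prod>bs\<in>codes m. if bs \<in> code m ` (X \<inter> A) then z else 1)"
    by (rule prod.cong[OF refl]) (auto simp: meets_cell_iff[symmetric])
  ultimately show ?thesis by simp
qed

lemma eventually_inj_on_code:
  assumes "finite F" "F \<subseteq> space M"
  shows "eventually (\<lambda>m. inj_on (code m) F) sequentially"
proof -
  have "eventually (\<lambda>m. code m x \<noteq> code m y) sequentially" if "x \<in> F" "y \<in> F" "x \<noteq> y" for x y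
  proof -
    have "\<not> (\<forall>i. x \<in> B i \<longleftrightarrow> y \<in> B i)" using separating[of x y] that assms(2) by auto
    then obtain i where i: "x \<in> B i \<longleftrightarrow> y \<notin> B i" by blast
    have "code m x \<noteq> code m y" if "m > i" for m
      using i that arg_cong[of "code m x" "code m y" "\<lambda>bs. bs ! i"] by (auto simp: code_def)
    then show ?thesis unfolding eventually_sequentially by (intro exI[of _ "Suc i"]) auto
  qed
  then have "eventually (\<lambda>m. \<forall>(x, y)\<in>F \<times> F. x \<noteq> y \<longrightarrow> code m x \<noteq> code m y) sequentially"
    using assms(1) by (intro eventually_ball_finite) (auto intro: eventually_mono)
  then show ?thesis
    by (rule eventually_mono) (auto simp: inj_on_def)
qed

lemma filterlim_card_code_image:
  assumes "infinite Y" "Y \<subseteq> space M"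
  shows "filterlim (\<lambda>m. card (code m ` Y)) at_top sequentially"
  unfolding filterlim_at_top
proof
  fix k
  obtain F where F: "finite F" "card F = k" "F \<subseteq> Y"
    using infinite_arbitrarily_large[OF assms(1)] by blast
  have "eventually (\<lambda>m. inj_on (code m) F) sequentially"
    using F assms(2) by (intro eventually_inj_on_code) auto
  then show "eventually (\<lambda>m. k \<le> card (code m ` Y)) sequentially"
  proof (rule eventually_mono)
    fix m assume "inj_on (code m) F"
    then have "k = card (code m ` F)" using F by (simp add: card_image)
    also have "\<dots> \<le> card (code m ` Y)"
      using F(3) finite_code_image by (intro card_mono) auto
    finally show "k \<le> card (code m ` Y)" .
  qed
qed

lemma tendsto_power_card_code_image:
  assumes "X \<subseteq> space M" "0 \<le> z" "z < 1"
  shows "(\<lambda>m. z ^ card (code m ` (X \<inter> A))) \<longlonglongrightarrow> enat_power z (Ncount A X)"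
proof (cases "finite (X \<inter> A)")
  case True
  have "X \<inter> A \<subseteq> space M" using assms(1) by blast
  from eventually_inj_on_code[OF True this]
  have "eventually (\<lambda>m. card (code m ` (X \<inter> A)) = card (X \<inter> A)) sequentially"
    by (rule eventually_mono) (rule card_image)
  then have "eventually (\<lambda>m. z ^ card (code m ` (X \<inter> A)) = enat_power z (Ncount A X)) sequentially"
    using True by (auto elim: eventually_mono simp: Ncount_def enat_power_def Int_commute)
  then show ?thesis by (rule tendsto_eventually)
next
  case False
  then have "enat_power z (Ncount A X) = 0" by (simp add: Ncount_def enat_power_def Int_commute)
  moreover have "X \<inter> A \<subseteq> space M" using assms(1) by blast
  ultimately show ?thesis
    using filterlim_compose[OF LIMSEQ_power_zero filterlim_card_code_image[OF False], of z] assms(2,3)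
    by simp
qed

end

lemma (in prob_space) expectation_if_event:
  fixes z :: real
  assumes "E \<in> events"
  shows "expectation (\<lambda>\<omega>. if \<omega> \<in> E then z else 1) = 1 - (1 - z) * prob E"
proof -
  have "expectation (\<lambda>\<omega>. if \<omega> \<in> E then z else 1) = expectation (\<lambda>\<omega>. 1 - (1 - z) * indicator E \<omega>)"
    by (rule Bochner_Integration.integral_cong) (auto simp: indicator_def)
  also have "\<dots> = 1 - (1 - z) * prob E"
    using assms by (subst Bochner_Integration.integral_diff)
      (auto simp: prob_space less_top[symmetric] intro!: integrable_real_indicator)
  finally show ?thesis .
qed

locale cell_approximation = diffuse_cr_process P M \<pi> + separating_cells M B A
  for P :: "'b measure" and M :: "'a measure" and \<pi> :: "'b \<Rightarrow> 'a set" and B A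
begin

definition hit_prob :: "bool list \<Rightarrow> real" where
  "hit_prob bs = prob {\<omega> \<in> space P. \<pi> \<omega> \<inter> cell bs \<noteq> {}}"

lemma hit_prob_nonneg: "0 \<le> hit_prob bs" and hit_prob_le_1: "hit_prob bs \<le> 1"
  by (simp_all add: hit_prob_def)

lemma hit_prob_le_take: "hit_prob bs \<le> hit_prob (take k bs)"
  unfolding hit_prob_def
  using cell_subset_take[of bs k] by (intro finite_measure_mono sets_meets sets_cell) auto

lemma power_card_code_image_eq_prod_Ncount:
  fixes z :: real
  shows "z ^ card (code m ` (\<pi> \<omega> \<inter> A)) = (\<Prod>bs\<in>codes m. if Ncount (cell bs) (\<pi> \<omega>) = 0 then 1 else z)"
  by (simp add: power_card_code_image_eq_prod Ncount_eq_0_iff)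

lemma borel_measurable_cell_weight:
  "(\<lambda>\<omega>. if Ncount (cell bs) (\<pi> \<omega>) = 0 then 1 else z :: real) \<in> borel_measurable P"
  using measurable_compose[OF measurable_Ncount[OF sets_cell], of "\<lambda>n. if n = 0 then 1 else z" borel]
  by simp

lemma expectation_power_card_code_image:
  fixes z :: real
  shows "expectation (\<lambda>\<omega>. z ^ card (code m ` (\<pi> \<omega> \<inter> A))) = (\<Prod>bs\<in>codes m. 1 - (1 - z) * hit_prob bs)"
proof -
  let ?w = "\<lambda>bs \<omega>. if Ncount (cell bs) (\<pi> \<omega>) = 0 then 1 else z"
  have "indep_vars (\<lambda>_. count_space UNIV) (\<lambda>bs \<omega>. Ncount (cell bs) (\<pi> \<omega>)) (codes m)"
    by (rule indep_vars_Ncount_finite[OF finite_codes sets_cell disjoint_cells])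
  then have indep: "indep_vars (\<lambda>_. borel) ?w (codes m)"
    by (rule indep_vars_compose2[where Y="\<lambda>_ n. if n = 0 then 1 else z"]) simp
  have integrable: "integrable P (?w bs)" for bs
    by (rule integrable_const_bound[where B="max 1 \<bar>z\<bar>"]) (auto simp: borel_measurable_cell_weight)
  have "expectation (\<lambda>\<omega>. z ^ card (code m ` (\<pi> \<omega> \<inter> A))) = expectation (\<lambda>\<omega>. \<Prod>bs\<in>codes m. ?w bs \<omega>)"
    by (simp add: power_card_code_image_eq_prod_Ncount)
  also have "\<dots> = (\<Prod>bs\<in>codes m. expectation (?w bs))"
    by (rule indep_vars_lebesgue_integral[OF finite_codes indep integrable])
  also have "\<dots> = (\<Prod>bs\<in>codes m. 1 - (1 - z) * hit_prob bs)"
  proof (rule prod.cong[OF refl])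
    fix bs
    have "expectation (?w bs) = expectation (\<lambda>\<omega>. if \<omega> \<in> {\<omega> \<in> space P. \<pi> \<omega> \<inter> cell bs \<noteq> {}} then z else 1)"
      by (rule Bochner_Integration.integral_cong) (auto simp: Ncount_eq_0_iff)
    then show "expectation (?w bs) = 1 - (1 - z) * hit_prob bs"
      using expectation_if_event[OF sets_meets[OF sets_cell[of bs]], of z] by (simp add: hit_prob_def)
  qed
  finally show ?thesis .
qed

lemma tendsto_prod_hit_prob:
  assumes "0 \<le> z" "z < 1"
  shows "(\<lambda>m. \<Prod>bs\<in>codes m. 1 - (1 - z) * hit_prob bs) \<longlonglongrightarrow> expectation (\<lambda>\<omega>. enat_power z (Ncount A (\<pi> \<omega>)))"
proof -
  have "(\<lambda>m. expectation (\<lambda>\<omega>. z ^ card (code m ` (\<pi> \<omega> \<inter> A)))) \<longlonglongrightarrow> expectation (\<lambda>\<omega>. enat_power z (Ncount A (\<pi> \<omega>)))"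
  proof (rule integral_dominated_convergence[where w="\<lambda>_. 1"])
    show "(\<lambda>\<omega>. enat_power z (Ncount A (\<pi> \<omega>))) \<in> borel_measurable P"
      using measurable_compose[OF measurable_Ncount[OF sets_A], of "enat_power z" borel] by simp
    show "(\<lambda>\<omega>. z ^ card (code m ` (\<pi> \<omega> \<inter> A))) \<in> borel_measurable P" for m
      unfolding power_card_code_image_eq_prod_Ncount
      by (intro borel_measurable_prod borel_measurable_cell_weight)
    show "AE \<omega> in P. (\<lambda>m. z ^ card (code m ` (\<pi> \<omega> \<inter> A))) \<longlonglongrightarrow> enat_power z (Ncount A (\<pi> \<omega>))"
      using tendsto_power_card_code_image[OF cr_process_subset_space] assms by simp
    show "AE \<omega> in P. norm (z ^ card (code m ` (\<pi> \<omega> \<inter> A))) \<le> 1" for m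
      using assms by (simp add: power_le_one)
  qed simp
  then show ?thesis by (simp add: expectation_power_card_code_image)
qed

lemma poisson_if_hit_probs_vanish_bounded:
  assumes vanish: "\<And>e. 0 < e \<Longrightarrow> eventually (\<lambda>m. \<forall>bs\<in>codes m. hit_prob bs \<le> e) sequentially"
    and bounded: "\<And>m. (\<Sum>bs\<in>codes m. hit_prob bs) \<le> K"
  shows "poisson_distribution (distr P (count_space UNIV) (\<lambda>\<omega>. Ncount A (\<pi> \<omega>)))"
proof -
  define s where "s m = (\<Sum>bs\<in>codes m. hit_prob bs)" for m
  define G where "G z = expectation (\<lambda>\<omega>. enat_power z (Ncount A (\<pi> \<omega>)))" for z
  have lim: "(\<lambda>m. exp (- (1 - z) * s m)) \<longlonglongrightarrow> G z" if "0 \<le> z" "z < 1" for z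
  proof -
    have "(\<lambda>m. (\<Prod>bs\<in>codes m. 1 - (1 - z) * hit_prob bs) - exp (- (1 - z) * s m)) \<longlonglongrightarrow> 0"
      unfolding s_def using that
      by (intro tendsto_prod_one_minus_minus_exp_sum[OF finite_codes _ vanish bounded])
        (auto simp: hit_prob_nonneg)
    from tendsto_diff[OF tendsto_prod_hit_prob[OF that] this] show ?thesis by (simp add: G_def)
  qed
  \<comment> \<open>At \<open>z = 0\<close> the limit \<open>P(N\<^sub>A = 0)\<close> is positive, which forces the sums \<open>s m\<close> to converge.\<close>
  have "exp (- K) \<le> G 0"
    by (rule LIMSEQ_le_const[OF lim[of 0]]) (use bounded in \<open>auto simp: s_def\<close>)
  then have "0 < G 0" by (meson exp_gt_zero less_le_trans)
  then have "(\<lambda>m. - ln (exp (- s m))) \<longlonglongrightarrow> - ln (G 0)"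
    using lim[of 0] by (intro tendsto_intros) auto
  then have s_lim: "s \<longlonglongrightarrow> - ln (G 0)" by simp
  define c where "c = - ln (G 0)"
  have "0 \<le> c" unfolding c_def
    by (rule LIMSEQ_le_const[OF s_lim]) (auto simp: s_def hit_prob_nonneg sum_nonneg)
  moreover have "G z = exp (- (1 - z) * c)" if "0 \<le> z" "z < 1" for z
  proof -
    have "(\<lambda>m. exp (- (1 - z) * s m)) \<longlonglongrightarrow> exp (- (1 - z) * c)"
      using s_lim unfolding c_def by (intro tendsto_intros)
    then show ?thesis using lim[OF that] by (rule LIMSEQ_unique[rotated])
  qed
  ultimately show ?thesis
    by (intro poisson_distribution_if_enat_power_expectation[OF measurable_Ncount[OF sets_A]])
      (auto simp: G_def)
qed

lemma AE_infinite_if_hit_probs_unbounded: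
  assumes unbounded: "\<And>K. \<exists>m. K < (\<Sum>bs\<in>codes m. hit_prob bs)"
  shows "AE \<omega> in P. Ncount A (\<pi> \<omega>) = \<infinity>"
proof (rule AE_infinite_if_enat_power_expectation_zero[OF measurable_Ncount[OF sets_A]])
  define G where "G = expectation (\<lambda>\<omega>. enat_power (1/2) (Ncount A (\<pi> \<omega>)))"
  have "0 \<le> G" unfolding G_def by (simp add: enat_power_nonneg)
  moreover have "\<not> 0 < G"
  proof
    assume "0 < G"
    \<comment> \<open>The products are at most \<open>exp (- s / 2)\<close>, so a positive limit would bound the sums \<open>s\<close>
        eventually, hence everywhere.\<close>
    have "(\<lambda>m. \<Prod>bs\<in>codes m. 1 - (1/2) * hit_prob bs) \<longlonglongrightarrow> G"
      using tendsto_prod_hit_prob[of "1/2"] by (simp add: G_def)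
    from order_tendstoD(1)[OF this, of "G / 2"] \<open>0 < G\<close>
    obtain N where N: "\<And>m. m \<ge> N \<Longrightarrow> G / 2 < (\<Prod>bs\<in>codes m. 1 - (1/2) * hit_prob bs)"
      by (auto simp: eventually_sequentially)
    have "(\<Sum>bs\<in>codes m. hit_prob bs) \<le> - 2 * ln (G / 2)" if "m \<ge> N" for m
    proof -
      have "(\<Prod>bs\<in>codes m. 1 - (1/2) * hit_prob bs) \<le> exp (- (1/2) * (\<Sum>bs\<in>codes m. hit_prob bs))"
        by (rule prod_one_minus_le_exp_sum[OF finite_codes]) (simp_all add: hit_prob_nonneg hit_prob_le_1)
      then have "G / 2 < exp (- (1/2) * (\<Sum>bs\<in>codes m. hit_prob bs))"
        using N[OF that] by linarith
      then have "ln (G / 2) < - (1/2) * (\<Sum>bs\<in>codes m. hit_prob bs)"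
        using \<open>0 < G\<close> by (metis exp_gt_zero ln_exp ln_less_cancel_iff half_gt_zero)
      then show ?thesis by simp
    qed
    then have "(\<Sum>bs\<in>codes m. hit_prob bs) \<le> max (- 2 * ln (G / 2)) (Max ((\<lambda>m. \<Sum>bs\<in>codes m. hit_prob bs) ` {..<N}))" for m
      by (metis Max_ge finite_imageI finite_lessThan image_eqI le_max_iff_disj lessThan_iff not_le)
    then show False using unbounded by (meson not_le)
  qed
  ultimately show "expectation (\<lambda>\<omega>. enat_power (1/2) (Ncount A (\<pi> \<omega>))) = 0" by (simp add: G_def)
qed simp_all

lemma AE_infinite_if_hit_probs_not_vanish:
  assumes "0 < e" and not_vanish: "\<not> eventually (\<lambda>m. \<forall>bs\<in>codes m. hit_prob bs \<le> e) sequentially"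
  shows "AE \<omega> in P. Ncount A (\<pi> \<omega>) = \<infinity>"
proof -
  have "\<exists>bs. length bs = m \<and> e < hit_prob bs" for m
  proof -
    from not_vanish obtain m' where "m \<le> m'" "\<not> (\<forall>bs\<in>codes m'. hit_prob bs \<le> e)"
      unfolding eventually_sequentially by (meson not_le)
    then obtain bs where "length bs = m'" "e < hit_prob bs" by (auto simp: codes_def not_le)
    then show ?thesis
      using hit_prob_le_take[of bs m] \<open>m \<le> m'\<close> by (intro exI[of _ "take m bs"]) auto
  qed
  moreover have "e < hit_prob (take k bs)" if "e < hit_prob bs" for bs k
    using that hit_prob_le_take[of bs k] by linarith
  ultimately obtain f where f: "\<And>n. length (f n) = n" "\<And>n. take n (f (Suc n)) = f n"
    "\<And>n. e < hit_prob (f n)"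
    using binary_koenig[of "\<lambda>bs. e < hit_prob bs"] by blast
  define D where "D n = cell (f n)" for n
  have decseq: "decseq D"
    unfolding D_def by (rule decseq_SucI) (metis cell_subset_take f(2))
  have shrinking: "x = y" if "x \<in> (\<Inter>n. D n)" "y \<in> (\<Inter>n. D n)" for x y
  proof (rule separating)
    show "x \<in> space M" "y \<in> space M"
      using that cell_subset[of "f 0"] sets.sets_into_space[OF sets_A] by (auto simp: D_def)
    have "z \<in> B i \<longleftrightarrow> f (Suc i) ! i" if "z \<in> (\<Inter>n. D n)" for z i
      using that f(1)[of "Suc i"] by (auto simp: D_def mem_cell_iff)
    then show "x \<in> B i \<longleftrightarrow> y \<in> B i" for i using that by blast
  qed
  have hit: "e \<le> prob {\<omega> \<in> space P. \<pi> \<omega> \<inter> D n \<noteq> {}}" for n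
    using f(3)[of n] by (simp add: D_def hit_prob_def)
  have "D n \<in> sets M" for n by (simp add: D_def sets_cell)
  from AE_infinite_if_shrinking_sets_hit[OF decseq this shrinking \<open>0 < e\<close> hit]
  have "AE \<omega> in P. infinite (\<pi> \<omega> \<inter> D 0)" .
  moreover have "D 0 = A" using f(1)[of 0] by (simp add: D_def cell_Nil)
  ultimately show ?thesis by (auto simp: Ncount_def Int_commute)
qed

lemma poisson_distribution_Ncount: "poisson_distribution (distr P (count_space UNIV) (\<lambda>\<omega>. Ncount A (\<pi> \<omega>)))"
proof -
  have "poisson_distribution (distr P (count_space UNIV) (\<lambda>\<omega>. Ncount A (\<pi> \<omega>)))"
    if "AE \<omega> in P. Ncount A (\<pi> \<omega>) = \<infinity>"
    using that by (rule poisson_distribution_if_AE_infinite[OF measurable_Ncount[OF sets_A]])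
  then show ?thesis
    using poisson_if_hit_probs_vanish_bounded AE_infinite_if_hit_probs_unbounded
      AE_infinite_if_hit_probs_not_vanish by (meson not_le)
qed

end

theorem theorem1p11:
  fixes P :: "'b measure" and M :: "'a measure" and \<pi> :: "'b \<Rightarrow> 'a set"
  assumes "prob_space P"
    and "{(x, x) | x. x \<in> space M} \<in> sets (M \<Otimes>\<^sub>M M)"
    and "cr_set P M \<pi>"
    and "constructive P M \<pi>"
    and "independent_increments P M \<pi>"
    and "\<forall>x\<in>space M. measure P {\<omega> \<in> space P. \<pi> \<omega> \<inter> {x} \<noteq> {}} = 0"
  shows "poisson_process P M \<pi>"
proof -
  obtain B :: "nat \<Rightarrow> 'a set" where B: "\<And>i. B i \<in> sets M"
    and separating: "\<And>x y. x \<in> space M \<Longrightarrow> y \<in> space M \<Longrightarrow> (\<And>i. x \<in> B i \<longleftrightarrow> y \<in> B i) \<Longrightarrow> x = y"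
    using separating_family_of_measurable_diagonal[OF assms(2)] by blast
  have "poisson_distribution (distr P (count_space UNIV) (\<lambda>\<omega>. Ncount A (\<pi> \<omega>)))"
    if "A \<in> sets M" for A
  proof -
    interpret cell_approximation P M \<pi> B A
      by (intro cell_approximation.intro diffuse_cr_process.intro cr_process.intro
          separating_cells.intro diffuse_cr_process_axioms.intro cr_process_axioms.intro)
        (use assms B separating that in auto)
    show ?thesis by (rule poisson_distribution_Ncount)
  qed
  then show ?thesis using assms(3,5) by (simp add: poisson_process_def)
qed

end
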